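(* Let $r,s>0$ and let $\mathbf{P}$ be a poset in $C(\{r,s\})$, i.e. $\mathbf{P}$ has an interval representation in which every interval has length $r$ or $s$. Then $\dim(\mathbf{P})\le 5$.
   Context: An interval representation of a poset $(X,P)$ assigns to each $x\in X$ a closed real interval $[l_x,r_x]$ such that $x<y$ in $P$ iff $r_x<l_y$; the length of $[l_x,r_x]$ is $r_x-l_x$. The dimension $\dim(\mathbf{P})$ is the minimum number of linear extensions of $P$ whose intersection is $P$. *)

theory Defs
  imports Complex_Main
begin

text \<open>A poset (X,P) is given by its ground set X and its strict order relation P
  (a set of pairs, (x,y) \<in> P meaning x < y in P).\<close>

definition linear_extension :: "'a set \<Rightarrow> 'a rel \<Rightarrow> 'a rel \<Rightarrow> bool" where
  "linear_extension X P L \<longleftrightarrow>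
     L \<subseteq> X \<times> X \<and> irrefl L \<and> trans L \<and>
     (\<forall>x\<in>X. \<forall>y\<in>X. x \<noteq> y \<longrightarrow> (x, y) \<in> L \<or> (y, x) \<in> L) \<and> P \<subseteq> L"

definition order_dim :: "'a set \<Rightarrow> 'a rel \<Rightarrow> nat" where
  "order_dim X P = (LEAST k. \<exists>Ls. finite Ls \<and> card Ls = k \<and>
        (\<forall>L\<in>Ls. linear_extension X P L) \<and> \<Inter>Ls = P)"

definition interval_rep :: "'a set \<Rightarrow> 'a rel \<Rightarrow> ('a \<Rightarrow> real) \<Rightarrow> ('a \<Rightarrow> real) \<Rightarrow> bool" where
  "interval_rep X P lft rgt \<longleftrightarrow>
     P \<subseteq> X \<times> X \<and> (\<forall>x\<in>X. lft x \<le> rgt x) \<and>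
     (\<forall>x\<in>X. \<forall>y\<in>X. (x, y) \<in> P \<longleftrightarrow> rgt x < lft y)"

definition in_class_C :: "real set \<Rightarrow> 'a set \<Rightarrow> 'a rel \<Rightarrow> bool" where
  "in_class_C Lens X P \<longleftrightarrow>
     (\<exists>lft rgt. interval_rep X P lft rgt \<and> (\<forall>x\<in>X. rgt x - lft x \<in> Lens))"

end

(*
  Placing every element at a point of its interval and sorting by these points (breaking
  ties by further keys) always gives a linear extension. It remains to choose five such
  placements so that every incomparable pair x, y (i.e. l y \<le> g x) is reversed by one of them.

  If x and y have different lengths, put the intervals of length r at their right ends and
  the others at their left ends, or the other way round; at a common point left ends come
  first. If they have the same length w and l y < l x, either of these two placements already
  puts y first. If l x \<le> l y \<le> l x + w, split the line into cells [k w, (k+1) w): the left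
  ends of x and y lie in the same or in adjacent cells. In the same cell, placing both at the
  right end of the cell and sorting by decreasing left end puts y first. In adjacent cells,
  placing the intervals whose cell index is even (resp. odd) at their right ends and the
  others at their left ends reverses the pair for one of the two parities. Identical intervals
  are ordered by an injective labelling, decreasingly in the grid placement and increasingly
  in the endpoint placements.
*)
theory Submission
  imports Defs "HOL-Library.Product_Lexorder"
begin

definition key_order :: "'a set \<Rightarrow> ('a \<Rightarrow> 'b::linorder) \<Rightarrow> 'a rel" where
  "key_order X K = {(x, y) \<in> X \<times> X. K x < K y}"

lemma linear_extension_key_order:
  assumes "inj_on K X" and "P \<subseteq> X \<times> X" and "\<And>x y. (x, y) \<in> P \<Longrightarrow> K x < K y"
  shows "linear_extension X P (key_order X K)"
  using assms unfolding linear_extension_def key_order_def irrefl_def trans_def inj_on_def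
  by (auto dest: order_less_trans) (meson linorder_neqE)

lemma linear_extension_point_key_order:
  fixes p :: "'a \<Rightarrow> real" and \<sigma> :: "'a \<Rightarrow> 'b::linorder"
  assumes "interval_rep X P l g" and "\<And>x. x \<in> X \<Longrightarrow> l x \<le> p x \<and> p x \<le> g x"
    and "inj_on \<sigma> X"
  shows "linear_extension X P (key_order X (\<lambda>x. (p x, \<sigma> x)))"
proof (rule linear_extension_key_order)
  show "inj_on (\<lambda>x. (p x, \<sigma> x)) X"
    using \<open>inj_on \<sigma> X\<close> by (auto simp: inj_on_def)
  show "P \<subseteq> X \<times> X"
    using assms(1) by (simp add: interval_rep_def)
  fix x y assume "(x, y) \<in> P"
  with assms(1) have "x \<in> X" "y \<in> X" "g x < l y"
    by (auto simp: interval_rep_def)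
  then have "p x < p y"
    using assms(2)[of x] assms(2)[of y] by linarith
  then show "(p x, \<sigma> x) < (p y, \<sigma> y)"
    by simp
qed

lemma Inter_realizer_eq:
  assumes "Ls \<noteq> {}" and "\<forall>L\<in>Ls. linear_extension X P L"
    and "\<And>x y. x \<in> X \<Longrightarrow> y \<in> X \<Longrightarrow> x \<noteq> y \<Longrightarrow> (x, y) \<notin> P \<Longrightarrow> \<exists>L\<in>Ls. (y, x) \<in> L"
  shows "\<Inter>Ls = P"
proof
  show "P \<subseteq> \<Inter>Ls"
    using assms(2) by (auto simp: linear_extension_def)
  show "\<Inter>Ls \<subseteq> P"
  proof (rule subrelI)
    fix x y assume xy: "(x, y) \<in> \<Inter>Ls"
    obtain L0 where "L0 \<in> Ls" using assms(1) by blast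
    with xy have "(x, y) \<in> L0" by blast
    with \<open>L0 \<in> Ls\<close> assms(2) have "x \<in> X" "y \<in> X" "x \<noteq> y"
      by (auto simp: linear_extension_def irrefl_def)
    show "(x, y) \<in> P"
    proof (rule ccontr)
      assume "(x, y) \<notin> P"
      then obtain L where "L \<in> Ls" "(y, x) \<in> L"
        using assms(3) \<open>x \<in> X\<close> \<open>y \<in> X\<close> \<open>x \<noteq> y\<close> by blast
      moreover from this xy have "(x, y) \<in> L" by blast
      ultimately show False
        using assms(2) unfolding linear_extension_def by (meson irrefl_def transD)
    qed
  qed
qed

lemma order_dim_le_card:
  assumes "finite Ls" and "\<forall>L\<in>Ls. linear_extension X P L" and "\<Inter>Ls = P"
  shows "order_dim X P \<le> card Ls"
  unfolding order_dim_def using assms by (intro Least_le) blast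

definition endpoint_order :: "'a set \<Rightarrow> ('a \<Rightarrow> real) \<Rightarrow> ('a \<Rightarrow> real) \<Rightarrow> 'a set \<Rightarrow> ('a \<Rightarrow> real) \<Rightarrow> 'a rel"
  where "endpoint_order X l g S t = key_order X (\<lambda>x. (if x \<in> S then g x else l x, x \<in> S, t x))"

definition cell :: "('a \<Rightarrow> real) \<Rightarrow> ('a \<Rightarrow> real) \<Rightarrow> 'a \<Rightarrow> int" where
  "cell l g x = \<lfloor>l x / (g x - l x)\<rfloor>"

definition grid_order :: "'a set \<Rightarrow> ('a \<Rightarrow> real) \<Rightarrow> ('a \<Rightarrow> real) \<Rightarrow> ('a \<Rightarrow> real) \<Rightarrow> 'a rel" where
  "grid_order X l g t = key_order X (\<lambda>x. ((g x - l x) * (cell l g x + 1), - l x, - t x))"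

lemma grid_point_in_interval:
  assumes "l x < g x"
  shows "l x \<le> (g x - l x) * (cell l g x + 1) \<and> (g x - l x) * (cell l g x + 1) \<le> g x"
proof -
  have "g x - l x > 0" using assms by simp
  from floor_divide_lower[OF this, of "l x"] floor_divide_upper[OF this, of "l x"]
  show ?thesis
    unfolding cell_def by (simp add: algebra_simps)
qed

lemma linear_extension_endpoint_order:
  assumes "interval_rep X P l g" and "inj_on t X"
  shows "linear_extension X P (endpoint_order X l g S t)"
proof -
  have "l x \<le> (if x \<in> S then g x else l x) \<and> (if x \<in> S then g x else l x) \<le> g x"
    if "x \<in> X" for x
    using assms(1) that by (simp add: interval_rep_def)
  moreover have "inj_on (\<lambda>x. (x \<in> S, t x)) X"
    using assms(2) by (simp add: inj_on_def)
  ultimately show ?thesis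
    unfolding endpoint_order_def by (rule linear_extension_point_key_order[OF assms(1)])
qed

lemma linear_extension_grid_order:
  assumes "interval_rep X P l g" and "\<forall>x\<in>X. l x < g x" and "inj_on t X"
  shows "linear_extension X P (grid_order X l g t)"
proof -
  have "inj_on (\<lambda>x. (- l x, - t x)) X"
    using assms(3) by (simp add: inj_on_def)
  with assms(2) show ?thesis
    unfolding grid_order_def
    by (intro linear_extension_point_key_order[OF assms(1)] grid_point_in_interval) auto
qed

lemma endpoint_order_crossing:
  assumes "x \<in> X" and "y \<in> X" and "x \<in> S" and "y \<notin> S" and "l y \<le> g x"
  shows "(y, x) \<in> endpoint_order X l g S t"
  using assms by (auto simp: endpoint_order_def key_order_def)

lemma endpoint_order_same_side:
  assumes "x \<in> X" and "y \<in> X" and "x \<in> S \<longleftrightarrow> y \<in> S" and "g x - l x = g y - l y"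
    and "(l y, t y) < (l x, t x)"
  shows "(y, x) \<in> endpoint_order X l g S t"
  using assms by (auto simp: endpoint_order_def key_order_def)

lemma grid_order_same_cell:
  assumes "x \<in> X" and "y \<in> X" and "cell l g x = cell l g y" and "g x - l x = g y - l y"
    and "(l x, t x) < (l y, t y)"
  shows "(y, x) \<in> grid_order X l g t"
  using assms by (auto simp: grid_order_def key_order_def)

lemma floor_divide_within_period:
  fixes a b w :: real
  assumes "w > 0" and "a \<le> b" and "b \<le> a + w"
  shows "\<lfloor>b / w\<rfloor> = \<lfloor>a / w\<rfloor> \<or> \<lfloor>b / w\<rfloor> = \<lfloor>a / w\<rfloor> + 1"
proof -
  have "\<lfloor>a / w\<rfloor> \<le> \<lfloor>b / w\<rfloor>"
    using assms by (intro floor_mono divide_right_mono) auto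
  moreover have "b / w \<le> a / w + 1"
    using assms by (simp add: field_simps)
  then have "\<lfloor>b / w\<rfloor> \<le> \<lfloor>a / w\<rfloor> + 1"
    by (metis floor_add_int floor_mono of_int_1)
  ultimately show ?thesis by linarith
qed

definition two_length_realizer ::
    "real \<Rightarrow> 'a set \<Rightarrow> ('a \<Rightarrow> real) \<Rightarrow> ('a \<Rightarrow> real) \<Rightarrow> ('a \<Rightarrow> real) \<Rightarrow> 'a rel set" where
  "two_length_realizer r X l g t =
     {endpoint_order X l g {x. g x - l x \<noteq> r} t, endpoint_order X l g {x. g x - l x = r} t,
      grid_order X l g t,
      endpoint_order X l g {x. even (cell l g x)} t, endpoint_order X l g {x. odd (cell l g x)} t}"

lemma card_two_length_realizer: "card (two_length_realizer r X l g t) \<le> 5"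
  unfolding two_length_realizer_def
  by (intro card_insert_le_m1) simp_all

lemma linear_extensions_two_length_realizer:
  assumes "interval_rep X P l g" and "\<forall>x\<in>X. l x < g x" and "inj_on t X"
  shows "\<forall>L\<in>two_length_realizer r X l g t. linear_extension X P L"
  unfolding two_length_realizer_def
  using linear_extension_endpoint_order[OF assms(1,3)] linear_extension_grid_order[OF assms]
  by blast

lemma two_length_realizer_reverses_equal_lengths:
  assumes "x \<in> X" and "y \<in> X" and "x \<noteq> y" and "inj_on t X"
    and "g x - l x = g y - l y" and "l x < g x" and "l y \<le> g x"
  shows "\<exists>L\<in>two_length_realizer r X l g t. (y, x) \<in> L"
proof -
  have "(l x, t x) \<noteq> (l y, t y)"
    using assms(1-4) by (auto simp: inj_on_def)
  then consider "(l y, t y) < (l x, t x)" | "(l x, t x) < (l y, t y)"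
    by (meson linorder_neqE)
  then show ?thesis
  proof cases
    case 1
    then have "(y, x) \<in> endpoint_order X l g {x. g x - l x \<noteq> r} t"
      using assms by (intro endpoint_order_same_side) auto
    then show ?thesis unfolding two_length_realizer_def by blast
  next
    case 2
    define w where "w = g x - l x"
    have "w > 0" "l x \<le> l y" "l y \<le> l x + w"
      using 2 assms(6,7) by (auto simp: w_def)
    then have "cell l g y = cell l g x \<or> cell l g y = cell l g x + 1"
      using floor_divide_within_period unfolding cell_def w_def assms(5)[symmetric] by blast
    then show ?thesis
    proof
      assume "cell l g y = cell l g x"
      then have "(y, x) \<in> grid_order X l g t"
        using 2 assms by (intro grid_order_same_cell) auto
      then show ?thesis unfolding two_length_realizer_def by blast
    next
      assume "cell l g y = cell l g x + 1"
      then have "(y, x) \<in> endpoint_order X l g {x. even (cell l g x)} t \<or>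
                 (y, x) \<in> endpoint_order X l g {x. odd (cell l g x)} t"
        using assms by (cases "even (cell l g x)") (auto intro: endpoint_order_crossing)
      then show ?thesis unfolding two_length_realizer_def by blast
    qed
  qed
qed

lemma two_length_realizer_reverses_distinct_lengths:
  assumes "x \<in> X" and "y \<in> X" and "g x - l x \<in> {r, s}" and "g y - l y \<in> {r, s}"
    and "g x - l x \<noteq> g y - l y" and "l y \<le> g x"
  shows "\<exists>L\<in>two_length_realizer r X l g t. (y, x) \<in> L"
proof (cases "g x - l x = r")
  case True
  with assms have "(y, x) \<in> endpoint_order X l g {x. g x - l x = r} t"
    by (intro endpoint_order_crossing) auto
  then show ?thesis unfolding two_length_realizer_def by blast
next
  case False
  with assms have "(y, x) \<in> endpoint_order X l g {x. g x - l x \<noteq> r} t"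
    by (intro endpoint_order_crossing) auto
  then show ?thesis unfolding two_length_realizer_def by blast
qed

lemma Inter_two_length_realizer:
  assumes "interval_rep X P l g" and "\<forall>x\<in>X. g x - l x \<in> {r, s}" and "r > 0" and "s > 0"
    and "inj_on t X"
  shows "\<Inter>(two_length_realizer r X l g t) = P"
proof (rule Inter_realizer_eq)
  have "\<forall>x\<in>X. l x < g x"
    using assms(2-4) by auto
  then show "\<forall>L\<in>two_length_realizer r X l g t. linear_extension X P L"
    by (rule linear_extensions_two_length_realizer[OF assms(1) _ assms(5)])
  fix x y assume "x \<in> X" "y \<in> X" "x \<noteq> y" "(x, y) \<notin> P"
  then have "l y \<le> g x"
    using assms(1) by (auto simp: interval_rep_def)
  with \<open>\<forall>x\<in>X. l x < g x\<close> show "\<exists>L\<in>two_length_realizer r X l g t. (y, x) \<in> L"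
    using two_length_realizer_reverses_equal_lengths two_length_realizer_reverses_distinct_lengths
      assms(2,5) \<open>x \<in> X\<close> \<open>y \<in> X\<close> \<open>x \<noteq> y\<close> by metis
qed (simp add: two_length_realizer_def)

theorem proposition6p1:
  fixes r s :: real and X :: "'a set" and P :: "'a rel"
  assumes "r > 0" and "s > 0"
    and "finite X"
    and "in_class_C {r, s} X P"
  shows "order_dim X P \<le> 5"
proof -
  obtain l g where rep: "interval_rep X P l g" and len: "\<forall>x\<in>X. g x - l x \<in> {r, s}"
    using assms(4) unfolding in_class_C_def by blast
  obtain f :: "'a \<Rightarrow> nat" and n where "bij_betw f X {..<n}"
    using ex_bij_betw_finite_nat[OF assms(3)] by (auto simp: atLeast0LessThan)
  then have tie: "inj_on (\<lambda>x. real (f x)) X"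
    by (auto simp: bij_betw_def inj_on_def)
  define Ls where "Ls = two_length_realizer r X l g (\<lambda>x. real (f x))"
  have "order_dim X P \<le> card Ls"
  proof (rule order_dim_le_card)
    show "finite Ls"
      by (simp add: Ls_def two_length_realizer_def)
    have "\<forall>x\<in>X. l x < g x"
      using len assms(1,2) by auto
    then show "\<forall>L\<in>Ls. linear_extension X P L"
      unfolding Ls_def by (rule linear_extensions_two_length_realizer[OF rep _ tie])
    show "\<Inter>Ls = P"
      unfolding Ls_def by (rule Inter_two_length_realizer[OF rep len assms(1,2) tie])
  qed
  also have "\<dots> \<le> 5"
    unfolding Ls_def by (rule card_two_length_realizer)
  finally show ?thesis .
qed

end
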